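(* For every $(s_1,s_2,s_3)\in\mathbb{C}^3$ and $Z\in\mathcal{H}_3$, \[ p_{s_1,s_2,s_3}(-Z^{-1})=e^{(s_1+2s_2+3s_3)\pi i}\,p_{s_2,s_1,-s_1-s_2-s_3}(WZW),\qquad W=\begin{pmatrix}0&0&1\\0&1&0\\1&0&0\end{pmatrix}. \]
   Context: $\mathcal{H}_n$ is the Siegel upper half space of degree $n$ and $\mathcal{P}_n$ the cone of real symmetric positive definite $n\times n$ matrices. Let $h_n:\mathcal{H}_n\to\mathbb{C}$ be the unique holomorphic function with $e^{h_n(Z)}=\det Z$ and $h_n(iY)=\frac{\pi i n}{2}+\log\det Y$ for $Y\in\mathcal{P}_n$. For $Z\in\mathcal{H}_3$ with upper left $j\times j$ block $Z_j$, $p_{s,w,u}(Z)=e^{s h_1(Z_1)}e^{w h_2(Z_2)}e^{u h_3(Z)}$. *)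

theory Defs
  imports "HOL-Analysis.Analysis" "HOL-Library.Numeral_Type"
begin

definition posdef_cone :: "(real^'n^'n) set" where
  "posdef_cone = {Y. transpose Y = Y \<and> (\<forall>x::real^'n. x \<noteq> 0 \<longrightarrow> x \<bullet> (Y *v x) > 0)}"

definition im_mat :: "complex^'n^'n \<Rightarrow> real^'n^'n" where
  "im_mat Z = (\<chi> i j. Im (Z $ i $ j))"

definition siegel_H :: "(complex^'n^'n) set" where
  "siegel_H = {Z. transpose Z = Z \<and> im_mat Z \<in> posdef_cone}"

text \<open>Holomorphy of a function on the Siegel upper half space (a relatively open subset of
  the complex vector space of symmetric matrices): complex Frechet differentiability,
  i.e. a Frechet derivative that is complex linear.\<close>
definition holomorphic_siegel :: "(complex^'n^'n \<Rightarrow> complex) \<Rightarrow> bool" where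
  "holomorphic_siegel f \<longleftrightarrow>
     (\<forall>Z\<in>siegel_H. \<exists>D. (\<forall>c A. D (\<chi> i j. c * A $ i $ j) = c * D A) \<and>
                        (f has_derivative D) (at Z within siegel_H))"

text \<open>The holomorphic branch h_n of log det on H_n, normalised on iP_n
  (extended by 0 outside H_n so that it is a uniquely determined total function).\<close>
definition h_siegel :: "complex^'n^'n \<Rightarrow> complex" where
  "h_siegel = (THE f. holomorphic_siegel f \<and>
      (\<forall>Z\<in>siegel_H. exp (f Z) = det Z) \<and>
      (\<forall>Y\<in>posdef_cone. f (\<chi> i j. \<i> * complex_of_real (Y $ i $ j)) =
            pi * \<i> * of_nat CARD('n) / 2 + complex_of_real (ln (det Y))) \<and>
      (\<forall>Z. Z \<notin> siegel_H \<longrightarrow> f Z = 0))"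

text \<open>Upper left 1x1 and 2x2 blocks of a 3x3 matrix (indices 0,1,2 of type 3 in order).\<close>
definition block1 :: "complex^3^3 \<Rightarrow> complex^1^1" where
  "block1 Z = (\<chi> i j. Z $ 0 $ 0)"

definition idx23 :: "2 \<Rightarrow> 3" where
  "idx23 i = (if i = 0 then 0 else 1)"

definition block2 :: "complex^3^3 \<Rightarrow> complex^2^2" where
  "block2 Z = (\<chi> i j. Z $ idx23 i $ idx23 j)"

definition p_fun :: "complex \<Rightarrow> complex \<Rightarrow> complex \<Rightarrow> complex^3^3 \<Rightarrow> complex" where
  "p_fun s w u Z = exp (s * h_siegel (block1 Z)) * exp (w * h_siegel (block2 Z)) * exp (u * h_siegel Z)"

definition W3 :: "complex^3^3" where
  "W3 = (\<chi> i j. if i + j = 2 then 1 else 0)"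

end

theory Submission
  imports Defs
begin

text \<open>
  For \<open>n \<le> 3\<close> the branch \<open>h\<^sub>n\<close> exists: it is the sum of the principal logarithms of the
  quotients of consecutive leading principal minors of \<open>Z\<close>, which lie in the upper half plane
  because they are values of the form \<open>Im (x\<^sup>* Z x)\<close> at suitable vectors (Schur complements).
  It is unique because two continuous logarithms of the same function on the connected set
  \<open>H\<^sub>n\<close> that agree at \<open>i I\<close> coincide.

  The same principle gives, for \<open>Z \<in> H\<^sub>3\<close>, \<open>N = - Z\<^sup>-\<^sup>1\<close> and \<open>V = W Z W\<close>, writing \<open>X\<^sub>j\<close> for
  the leading \<open>j \<times> j\<close> block,
  \<open>h\<^sub>1 (N\<^sub>1) = h\<^sub>2 (V\<^sub>2) - h\<^sub>3 (Z) + \<pi> i\<close>, \<open>h\<^sub>2 (N\<^sub>2) = h\<^sub>1 (V\<^sub>1) - h\<^sub>3 (Z) + 2 \<pi> i\<close>,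
  \<open>h\<^sub>3 (N) = - h\<^sub>3 (Z) + 3 \<pi> i\<close> and \<open>h\<^sub>3 (V) = h\<^sub>3 (Z)\<close>:
  both sides are continuous on \<open>H\<^sub>3\<close>, their exponentials agree by Cramer's rule and Jacobi's
  theorem on the minors of an inverse, and they agree at \<open>i I\<close>, which is fixed by both maps.
  Substituting these identities into \<open>p\<^sub>s\<^sub>,\<^sub>w\<^sub>,\<^sub>u (N)\<close> gives the claim.
\<close>

lemma UNIV_num1_eq: "(UNIV :: 1 set) = {0}"
  by (metis (full_types) UNIV_1 UNIV_I singletonD)

lemma UNIV_num2_eq: "(UNIV :: 2 set) = {0, 1}"
proof -
  have "(2::2) = 0" by simp
  then show ?thesis using UNIV_2 by auto
qed

lemma UNIV_num3_eq: "(UNIV :: 3 set) = {0, 1, 2}"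
proof -
  have "(3::3) = 0" by simp
  then show ?thesis using UNIV_3 by auto
qed

lemma exhaust_num2: "(k::2) = 0 \<or> k = 1"
  using UNIV_num2_eq by auto

lemma exhaust_num3: "(k::3) = 0 \<or> k = 1 \<or> k = 2"
  using UNIV_num3_eq by auto

lemma sum_UNIV_num2: "sum f (UNIV :: 2 set) = f 0 + f 1"
  unfolding UNIV_num2_eq by simp

lemma sum_UNIV_num3: "sum f (UNIV :: 3 set) = f 0 + f 1 + f 2"
  unfolding UNIV_num3_eq by (simp add: add.assoc)

lemma prod_UNIV_num2: "prod f (UNIV :: 2 set) = f 0 * f 1"
  unfolding UNIV_num2_eq by simp

lemma prod_UNIV_num3: "prod f (UNIV :: 3 set) = f 0 * f 1 * f 2"
  unfolding UNIV_num3_eq by (simp add: mult.assoc)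

lemma forall_num3: "(\<forall>i::3. P i) \<longleftrightarrow> P 0 \<and> P 1 \<and> P 2"
  by (metis UNIV_I UNIV_num3_eq insert_iff singletonD)

lemma det_num1: "det (A :: 'a::comm_ring_1^1^1) = A$0$0"
proof -
  have "(1::1) = 0" using UNIV_num1_eq by blast
  then show ?thesis using det_1[of A] by simp
qed

lemma det_num2: "det (A :: 'a::comm_ring_1^2^2) = A$0$0 * A$1$1 - A$0$1 * A$1$0"
proof -
  have "(2::2) = 0" by simp
  then show ?thesis using det_2[of A] by (simp only:) (simp add: algebra_simps)
qed

lemma det_num3: "det (A :: 'a::comm_ring_1^3^3) =
    A$0$0 * A$1$1 * A$2$2 + A$0$1 * A$1$2 * A$2$0 + A$0$2 * A$1$0 * A$2$1
  - A$0$0 * A$1$2 * A$2$1 - A$0$1 * A$1$0 * A$2$2 - A$0$2 * A$1$1 * A$2$0"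
proof -
  have "(3::3) = 0" by simp
  then show ?thesis using det_3[of A] by (simp only:) (simp add: algebra_simps)
qed

lemma inj_num1_to_num3: "inj (\<lambda>_::1. 0::3)"
  by (auto simp: inj_def UNIV_num1_eq)

lemma inj_idx23: "inj idx23"
proof (rule injI)
  fix i j :: 2 assume "idx23 i = idx23 j"
  then show "i = j" using exhaust_num2[of i] exhaust_num2[of j] by (auto simp: idx23_def)
qed

lemma inj_reverse_num3: "inj (\<lambda>i::3. 2 - i)"
  by (rule injI) simp

lemma symmetric_matrix_entry: "transpose A = A \<Longrightarrow> A $ i $ j = A $ j $ i"
  by (metis transpose_def vec_lambda_beta)

lemma quadratic_form_eq: "x \<bullet> (M *v x) = (\<Sum>i\<in>UNIV. \<Sum>j\<in>UNIV. x$i * M$i$j * x$j)"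
  for M :: "real^'n^'n"
  by (simp add: inner_vec_def matrix_vector_mult_def sum_distrib_left mult_ac)

lemma matrix_inv_inverse:
  assumes "invertible A"
  shows "A ** matrix_inv A = mat 1" "matrix_inv A ** A = mat 1"
  using someI_ex[OF assms[unfolded invertible_def]] by (simp_all add: matrix_inv_def)

lemma matrix_inv_eqI:
  fixes A :: "'a::comm_ring_1^'n^'n"
  assumes "A ** B = mat 1" "B ** A = mat 1"
  shows "matrix_inv A = B"
proof -
  have inv: "A ** matrix_inv A = mat 1" "matrix_inv A ** A = mat 1"
    using assms matrix_inv_inverse[of A] unfolding invertible_def by blast+
  have "matrix_inv A = matrix_inv A ** (A ** B)" using assms by simp
  also have "\<dots> = B" using inv by (simp add: matrix_mul_assoc)
  finally show ?thesis .
qed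

lemma mat_mult_mat: "(mat a :: 'a::semiring_1^'n^'n) ** mat b = mat (a * b)"
proof -
  have "(\<Sum>k\<in>UNIV. (if i = k then a else 0) * (if k = j then b else 0)) = (if i = j then a * b else 0)"
    for i j :: 'n
    by (subst sum.cong[OF refl, where h = "\<lambda>k. if k = i then (if i = j then a * b else 0) else 0"]) auto
  then show ?thesis by (simp add: matrix_matrix_mult_def mat_def vec_eq_iff)
qed

definition principal_submatrix :: "('m::finite \<Rightarrow> 'n::finite) \<Rightarrow> 'a^'n^'n \<Rightarrow> 'a^'m^'m" where
  "principal_submatrix \<sigma> A = (\<chi> i j. A $ \<sigma> i $ \<sigma> j)"

lemma continuous_on_principal_submatrix [continuous_intros]:
  "continuous_on S F \<Longrightarrow> continuous_on S (\<lambda>z. principal_submatrix \<sigma> (F z))"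
  unfolding principal_submatrix_def by (intro continuous_intros)

text \<open>Indices are taken modulo 3, so the cyclic order of rows and columns absorbs all cofactor signs.\<close>

definition adjugate3 :: "'a::comm_ring_1^3^3 \<Rightarrow> 'a^3^3" where
  "adjugate3 A = (\<chi> i j. A$(j+1)$(i+1) * A$(j+2)$(i+2) - A$(j+1)$(i+2) * A$(j+2)$(i+1))"

lemma adjugate3_mult:
  fixes A :: "'a::comm_ring_1^3^3"
  shows "A ** adjugate3 A = mat (det A)" "adjugate3 A ** A = mat (det A)"
proof -
  have wrap: "(3::3) = 0" "(4::3) = 1" by simp_all
  have "\<forall>i j. (A ** adjugate3 A) $ i $ j = mat (det A) $ i $ j"
      "\<forall>i j. (adjugate3 A ** A) $ i $ j = mat (det A) $ i $ j"
    by (simp_all add: forall_num3 matrix_matrix_mult_def sum_UNIV_num3 adjugate3_def det_num3 mat_def wrap)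
       (simp_all add: algebra_simps)
  then show "A ** adjugate3 A = mat (det A)" "adjugate3 A ** A = mat (det A)"
    by (simp_all add: vec_eq_iff)
qed

lemma matrix_inv_3:
  fixes A :: "'a::field^3^3"
  assumes "det A \<noteq> 0"
  shows "matrix_inv A = (\<chi> i j. adjugate3 A $ i $ j / det A)"
proof (rule matrix_inv_eqI)
  show "A ** (\<chi> i j. adjugate3 A $ i $ j / det A) = mat 1"
    using arg_cong[OF adjugate3_mult(1), of "\<lambda>M. (\<chi> i j. M $ i $ j / det A)"] assms
    by (simp add: matrix_matrix_mult_def sum_divide_distrib mat_def vec_eq_iff)
  show "(\<chi> i j. adjugate3 A $ i $ j / det A) ** A = mat 1"
    using arg_cong[OF adjugate3_mult(2), of "\<lambda>M. (\<chi> i j. M $ i $ j / det A)"] assms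
    by (simp add: matrix_matrix_mult_def sum_divide_distrib mat_def vec_eq_iff mult.commute)
qed

abbreviation imag_mat :: "real^'n^'n \<Rightarrow> complex^'n^'n" where
  "imag_mat Y \<equiv> \<chi> i j. \<i> * complex_of_real (Y $ i $ j)"

lemma det_imag_mat: "det (imag_mat Y) = \<i> ^ CARD('n) * complex_of_real (det (Y :: real^'n^'n))"
  unfolding det_def
  by (simp add: prod.distrib sum_distrib_left mult_ac)

lemma principal_submatrix_imag_mat_1:
  assumes "inj \<sigma>"
  shows "principal_submatrix \<sigma> (imag_mat (mat 1)) = imag_mat (mat 1)"
  using assms by (simp add: principal_submatrix_def mat_def vec_eq_iff inj_eq)

section \<open>The Siegel upper half space\<close>

lemma siegel_H_entry_sym: "Z \<in> siegel_H \<Longrightarrow> Z $ i $ j = Z $ j $ i"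
  unfolding siegel_H_def by (blast intro: symmetric_matrix_entry)

lemma siegel_HI:
  assumes "\<And>i j. Z $ i $ j = Z $ j $ i"
    and "\<And>x. x \<noteq> 0 \<Longrightarrow> 0 < x \<bullet> (im_mat Z *v x)"
  shows "Z \<in> siegel_H"
  using assms by (simp add: siegel_H_def posdef_cone_def transpose_def im_mat_def vec_eq_iff)

lemma mat_1_in_posdef_cone: "(mat 1 :: real^'n^'n) \<in> posdef_cone"
  unfolding posdef_cone_def by auto

lemma imag_mat_in_siegel_H:
  assumes "Y \<in> posdef_cone"
  shows "imag_mat Y \<in> siegel_H"
proof (rule siegel_HI)
  have "transpose Y = Y" using assms by (simp add: posdef_cone_def)
  then show "imag_mat Y $ i $ j = imag_mat Y $ j $ i" for i j
    by (simp add: symmetric_matrix_entry[of Y i j])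
  have "im_mat (imag_mat Y) = Y" by (simp add: im_mat_def vec_eq_iff)
  then show "x \<noteq> 0 \<Longrightarrow> 0 < x \<bullet> (im_mat (imag_mat Y) *v x)" for x
    using assms by (simp add: posdef_cone_def)
qed

lemma siegel_H_Im_hermitian_form_pos:
  fixes Z :: "complex^'n^'n" and x :: "complex^'n"
  assumes Z: "Z \<in> siegel_H" and x: "x \<noteq> 0"
  shows "0 < Im (\<Sum>i\<in>UNIV. cnj (x$i) * (Z *v x)$i)"
proof -
  define a where "a = (\<chi> i. Re (x$i))"
  define b where "b = (\<chi> i. Im (x$i))"
  have Im_eq: "Im (\<Sum>i\<in>UNIV. cnj (x$i) * (Z *v x)$i) =
      (\<Sum>i\<in>UNIV. \<Sum>j\<in>UNIV. Im (Z$i$j) * (a$i * a$j + b$i * b$j))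
    + (\<Sum>i\<in>UNIV. \<Sum>j\<in>UNIV. Re (Z$i$j) * (a$i * b$j - b$i * a$j))"
    by (simp add: matrix_vector_mult_def sum_distrib_left sum.distrib[symmetric]
        a_def b_def algebra_simps)
  \<comment> \<open>the real part of \<open>Z\<close> contributes an antisymmetric form, which vanishes\<close>
  have "(\<Sum>i\<in>UNIV. \<Sum>j\<in>UNIV. Re (Z$i$j) * (b$i * a$j)) = (\<Sum>j\<in>UNIV. \<Sum>i\<in>UNIV. Re (Z$i$j) * (b$i * a$j))"
    by (rule sum.swap)
  also have "\<dots> = (\<Sum>i\<in>UNIV. \<Sum>j\<in>UNIV. Re (Z$i$j) * (a$i * b$j))"
    using siegel_H_entry_sym[OF Z] by (simp add: mult_ac)
  finally have Re_part: "(\<Sum>i\<in>UNIV. \<Sum>j\<in>UNIV. Re (Z$i$j) * (a$i * b$j - b$i * a$j)) = 0"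
    by (simp add: right_diff_distrib sum_subtractf)
  have Im_part: "(\<Sum>i\<in>UNIV. \<Sum>j\<in>UNIV. Im (Z$i$j) * (a$i * a$j + b$i * b$j))
      = a \<bullet> (im_mat Z *v a) + b \<bullet> (im_mat Z *v b)"
    by (simp add: quadratic_form_eq im_mat_def sum_distrib_left sum.distrib algebra_simps)
  have pd: "v \<noteq> 0 \<Longrightarrow> 0 < v \<bullet> (im_mat Z *v v)" for v
    using Z by (simp add: siegel_H_def posdef_cone_def)
  have nonneg: "0 \<le> v \<bullet> (im_mat Z *v v)" for v
    using pd[of v] by (cases "v = 0") auto
  have "a \<noteq> 0 \<or> b \<noteq> 0"
    using x by (auto simp: a_def b_def vec_eq_iff complex_eq_iff)
  then have "0 < a \<bullet> (im_mat Z *v a) + b \<bullet> (im_mat Z *v b)"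
    using pd[of a] pd[of b] nonneg[of a] nonneg[of b] by (auto intro: add_pos_nonneg add_nonneg_pos)
  then show ?thesis using Im_eq Re_part Im_part by simp
qed

lemma siegel_H_Im_diag_pos:
  assumes "Z \<in> siegel_H"
  shows "0 < Im (Z $ k $ k)"
proof -
  have "0 < axis k 1 \<bullet> (im_mat Z *v axis k 1)"
    using assms by (simp add: siegel_H_def posdef_cone_def)
  then show ?thesis
    by (simp add: inner_axis' matrix_vector_mult_basis column_def im_mat_def)
qed

lemma siegel_H_Im_pos_of_kernel:
  fixes Z :: "complex^'n^'n" and x :: "complex^'n"
  assumes Z: "Z \<in> siegel_H" and xk: "x $ k = 1" and ker: "\<And>i. i \<noteq> k \<Longrightarrow> (Z *v x) $ i = 0"
  shows "0 < Im ((Z *v x) $ k)"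
proof -
  have "x \<noteq> 0" using xk by auto
  have "(\<Sum>i\<in>UNIV. cnj (x$i) * (Z *v x)$i) = (\<Sum>i\<in>UNIV. if i = k then (Z *v x) $ k else 0)"
    by (intro sum.cong) (auto simp: xk ker)
  then show ?thesis using siegel_H_Im_hermitian_form_pos[OF Z \<open>x \<noteq> 0\<close>] by simp
qed

lemma siegel_H_invertible:
  assumes "Z \<in> siegel_H"
  shows "invertible Z"
proof -
  have "x = 0" if "Z *v x = 0" for x
  proof (rule ccontr)
    assume "x \<noteq> 0"
    from siegel_H_Im_hermitian_form_pos[OF assms this] that show False by simp
  qed
  then show ?thesis
    by (simp add: invertible_left_inverse matrix_left_invertible_ker)
qed

lemma siegel_H_det_nonzero: "Z \<in> siegel_H \<Longrightarrow> det Z \<noteq> 0"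
  using siegel_H_invertible invertible_det_nz by blast

lemma convex_siegel_H: "convex (siegel_H :: (complex^'n^'n) set)"
  unfolding convex_def
proof (intro ballI allI impI)
  fix X Y :: "complex^'n^'n" and u v :: real
  assume X: "X \<in> siegel_H" and Y: "Y \<in> siegel_H" and uv: "0 \<le> u" "0 \<le> v" "u + v = 1"
  show "u *\<^sub>R X + v *\<^sub>R Y \<in> siegel_H"
  proof (rule siegel_HI)
    show "(u *\<^sub>R X + v *\<^sub>R Y) $ i $ j = (u *\<^sub>R X + v *\<^sub>R Y) $ j $ i" for i j
      using siegel_H_entry_sym[OF X] siegel_H_entry_sym[OF Y] by simp
    fix x :: "real^'n" assume "x \<noteq> 0"
    then have "0 < x \<bullet> (im_mat X *v x)" "0 < x \<bullet> (im_mat Y *v x)"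
      using X Y by (auto simp: siegel_H_def posdef_cone_def)
    moreover have "x \<bullet> (im_mat (u *\<^sub>R X + v *\<^sub>R Y) *v x)
        = u * (x \<bullet> (im_mat X *v x)) + v * (x \<bullet> (im_mat Y *v x))"
      by (simp add: quadratic_form_eq im_mat_def sum_distrib_left sum.distrib algebra_simps)
    ultimately show "0 < x \<bullet> (im_mat (u *\<^sub>R X + v *\<^sub>R Y) *v x)"
      using uv by (cases "u = 0") (auto intro!: add_pos_nonneg)
  qed
qed

lemma connected_siegel_H: "connected (siegel_H :: (complex^'n^'n) set)"
  by (rule convex_connected[OF convex_siegel_H])

lemma principal_submatrix_in_siegel_H:
  fixes \<sigma> :: "'m::finite \<Rightarrow> 'n::finite" and Z :: "complex^'n^'n"
  assumes \<sigma>: "inj \<sigma>" and Z: "Z \<in> siegel_H"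
  shows "principal_submatrix \<sigma> Z \<in> siegel_H"
proof (rule siegel_HI)
  show "principal_submatrix \<sigma> Z $ i $ j = principal_submatrix \<sigma> Z $ j $ i" for i j
    using siegel_H_entry_sym[OF Z] by (simp add: principal_submatrix_def)
  fix x :: "real^'m" assume x: "x \<noteq> 0"
  \<comment> \<open>push \<open>x\<close> forward along \<open>\<sigma>\<close>; the form of \<open>Im Z\<close> at \<open>y\<close> is the form of the submatrix at \<open>x\<close>\<close>
  define y :: "real^'n" where "y = (\<chi> k. \<Sum>i\<in>UNIV. if \<sigma> i = k then x $ i else 0)"
  have push: "(\<Sum>k\<in>UNIV. y $ k * f k) = (\<Sum>i\<in>UNIV. x $ i * f (\<sigma> i))" for f :: "'n \<Rightarrow> real"
  proof -
    have "(\<Sum>k\<in>UNIV. y $ k * f k) = (\<Sum>k\<in>UNIV. \<Sum>i\<in>UNIV. if \<sigma> i = k then x $ i * f k else 0)"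
      by (auto simp: y_def sum_distrib_right intro!: sum.cong)
    also have "\<dots> = (\<Sum>i\<in>UNIV. \<Sum>k\<in>UNIV. if \<sigma> i = k then x $ i * f k else 0)"
      by (rule sum.swap)
    finally show ?thesis by simp
  qed
  have "0 < y \<bullet> (im_mat Z *v y)"
  proof -
    obtain i where "x $ i \<noteq> 0" using x by (auto simp: vec_eq_iff)
    moreover have "y $ \<sigma> i = x $ i"
      by (simp add: y_def inj_eq[OF \<sigma>])
    ultimately have "y \<noteq> 0" by auto
    then show ?thesis using Z by (simp add: siegel_H_def posdef_cone_def)
  qed
  also have "y \<bullet> (im_mat Z *v y) = (\<Sum>k\<in>UNIV. y $ k * (\<Sum>l\<in>UNIV. y $ l * im_mat Z $ k $ l))"
    by (simp add: quadratic_form_eq sum_distrib_left mult_ac)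
  also have "\<dots> = (\<Sum>k\<in>UNIV. y $ k * (\<Sum>j\<in>UNIV. x $ j * im_mat Z $ k $ \<sigma> j))"
    by (simp add: push)
  also have "\<dots> = (\<Sum>i\<in>UNIV. x $ i * (\<Sum>j\<in>UNIV. x $ j * im_mat Z $ \<sigma> i $ \<sigma> j))"
    by (rule push)
  also have "\<dots> = x \<bullet> (im_mat (principal_submatrix \<sigma> Z) *v x)"
    by (simp add: quadratic_form_eq sum_distrib_left im_mat_def principal_submatrix_def mult_ac)
  finally show "0 < x \<bullet> (im_mat (principal_submatrix \<sigma> Z) *v x)" .
qed

lemma neg_matrix_inv_in_siegel_H:
  fixes Z :: "complex^'n^'n"
  assumes Z: "Z \<in> siegel_H"
  shows "- matrix_inv Z \<in> siegel_H"
proof -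
  define M where "M = matrix_inv Z"
  have r: "Z ** M = mat 1" and l: "M ** Z = mat 1"
    using matrix_inv_inverse[OF siegel_H_invertible[OF Z]] by (simp_all add: M_def)
  have "transpose Z = Z" using Z by (simp add: siegel_H_def)
  then have "Z ** transpose M = mat 1"
    using arg_cong[OF l, of transpose] by (simp add: matrix_transpose_mul)
  then have "transpose M = M"
    by (metis l matrix_mul_assoc matrix_mul_lid matrix_mul_rid)
  then have sym: "(- M) $ i $ j = (- M) $ j $ i" for i j
    by (simp add: symmetric_matrix_entry[of M i j])
  have "0 < x \<bullet> (im_mat (- M) *v x)" if x: "x \<noteq> 0" for x :: "real^'n"
  proof -
    define xc where "xc = (\<chi> i. complex_of_real (x$i))"
    define u where "u = M *v xc"
    have Zu: "Z *v u = xc" by (simp add: u_def matrix_vector_mul_assoc r)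
    have "xc \<noteq> 0" using x by (auto simp: xc_def vec_eq_iff)
    then have "u \<noteq> 0" using Zu by auto
    \<comment> \<open>with \<open>x = Z u\<close> real, the form of \<open>-M\<close> at \<open>x\<close> is minus the conjugate of the form of \<open>Z\<close> at \<open>u\<close>\<close>
    have form: "x \<bullet> (im_mat (- M) *v x) = - Im (\<Sum>i\<in>UNIV. xc$i * u$i)"
      unfolding quadratic_form_eq by (simp add: im_mat_def u_def matrix_vector_mult_def xc_def
          sum_distrib_left sum_negf[symmetric] algebra_simps)
    define q where "q = (\<Sum>i\<in>UNIV. cnj (u$i) * (Z *v u)$i)"
    have "0 < Im q"
      unfolding q_def by (rule siegel_H_Im_hermitian_form_pos[OF Z \<open>u \<noteq> 0\<close>])
    moreover have "(\<Sum>i\<in>UNIV. xc$i * u$i) = cnj q"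
      unfolding q_def Zu by (simp add: xc_def mult.commute)
    ultimately show ?thesis
      using form by simp
  qed
  then show ?thesis unfolding M_def[symmetric] by (intro siegel_HI sym)
qed

lemma neg_matrix_inv_imag_mat_1: "- matrix_inv (imag_mat (mat 1)) = (imag_mat (mat 1) :: complex^'n^'n)"
proof -
  have i: "imag_mat (mat 1) = (mat \<i> :: complex^'n^'n)"
    by (simp add: mat_def vec_eq_iff)
  have "matrix_inv (mat \<i> :: complex^'n^'n) = mat (- \<i>)"
    by (rule matrix_inv_eqI) (simp_all add: mat_mult_mat)
  then show ?thesis
    unfolding i by (simp add: mat_def vec_eq_iff)
qed

section \<open>Continuous logarithms\<close>

lemma continuous_log_unique:
  fixes F G :: "'a::topological_space \<Rightarrow> complex"
  assumes S: "connected S" and F: "continuous_on S F" and G: "continuous_on S G"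
    and exp_eq: "\<And>z. z \<in> S \<Longrightarrow> exp (F z) = exp (G z)"
    and a: "a \<in> S" "F a = G a" and z: "z \<in> S"
  shows "F z = G z"
proof -
  \<comment> \<open>\<open>F - G\<close> takes values in the discrete set \<open>2 \<pi> i \<int>\<close>\<close>
  have "(\<lambda>z. F z - G z) constant_on S"
  proof (rule continuous_discrete_range_constant[OF S])
    show "continuous_on S (\<lambda>z. F z - G z)" using F G by (rule continuous_on_diff)
    fix x assume x: "x \<in> S"
    show "\<exists>e>0. \<forall>y. y \<in> S \<and> F y - G y \<noteq> F x - G x \<longrightarrow> e \<le> norm (F y - G y - (F x - G x))"
    proof (intro exI[of _ 1] conjI allI impI)
      fix y assume y: "y \<in> S \<and> F y - G y \<noteq> F x - G x"
      let ?d = "F y - G y - (F x - G x)"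
      have "exp ?d = 1" using exp_eq x y by (simp add: exp_diff)
      then obtain n :: int where n: "Re ?d = 0" "Im ?d = 2 * pi * n"
        by (auto simp: exp_eq_1)
      then have "n \<noteq> 0" using y by (auto simp: complex_eq_iff)
      then have "1 \<le> \<bar>real_of_int n\<bar>" by linarith
      then have "1 \<le> 2 * pi * \<bar>real_of_int n\<bar>"
        using pi_gt3 by (smt (verit) mult_le_cancel_right1)
      also have "\<dots> = \<bar>Im ?d\<bar>" using n by (simp add: abs_mult)
      also have "\<dots> \<le> norm ?d" by (rule abs_Im_le_cmod)
      finally show "1 \<le> norm ?d" .
    qed simp
  qed
  then obtain c where "\<And>z. z \<in> S \<Longrightarrow> F z - G z = c"
    unfolding constant_on_def by blast
  then have "F z - G z = F a - G a" using a(1) z by simp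
  then show ?thesis using a(2) by simp
qed

lemma siegel_H_log_eqI:
  fixes F G :: "complex^'n^'n \<Rightarrow> complex"
  assumes "continuous_on siegel_H F" "continuous_on siegel_H G"
    and "\<And>Z. Z \<in> siegel_H \<Longrightarrow> exp (F Z) = exp (G Z)"
    and "F (imag_mat (mat 1)) = G (imag_mat (mat 1))" and "Z \<in> siegel_H"
  shows "F Z = G Z"
  by (rule continuous_log_unique[OF connected_siegel_H assms(1-3)
        imag_mat_in_siegel_H[OF mat_1_in_posdef_cone] assms(4,5)])

section \<open>The normalised logarithm of the determinant\<close>

definition normalized_log_det :: "(complex^'n^'n \<Rightarrow> complex) \<Rightarrow> bool" where
  "normalized_log_det f \<longleftrightarrow> holomorphic_siegel f \<and>
      (\<forall>Z\<in>siegel_H. exp (f Z) = det Z) \<and>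
      (\<forall>Y\<in>posdef_cone. f (imag_mat Y) =
            pi * \<i> * of_nat CARD('n) / 2 + complex_of_real (ln (det Y))) \<and>
      (\<forall>Z. Z \<notin> siegel_H \<longrightarrow> f Z = 0)"

lemma holomorphic_siegel_imp_continuous_on:
  fixes f :: "complex^'n^'n \<Rightarrow> complex"
  assumes "holomorphic_siegel f"
  shows "continuous_on siegel_H f"
  unfolding continuous_on_eq_continuous_within
proof
  fix Z :: "complex^'n^'n" assume "Z \<in> siegel_H"
  then obtain D where "(f has_derivative D) (at Z within siegel_H)"
    using assms unfolding holomorphic_siegel_def by blast
  then show "continuous (at Z within siegel_H) f" by (rule has_derivative_continuous)
qed

lemma normalized_log_det_continuous_on: "normalized_log_det f \<Longrightarrow> continuous_on siegel_H f"
  unfolding normalized_log_det_def by (blast intro: holomorphic_siegel_imp_continuous_on)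

lemma normalized_log_det_exp: "normalized_log_det f \<Longrightarrow> Z \<in> siegel_H \<Longrightarrow> exp (f Z) = det Z"
  unfolding normalized_log_det_def by blast

lemma normalized_log_det_imag_mat_1:
  assumes "normalized_log_det (f :: complex^'n^'n \<Rightarrow> complex)"
  shows "f (imag_mat (mat 1)) = pi * \<i> * of_nat CARD('n) / 2"
proof -
  have "f (imag_mat (mat 1)) = pi * \<i> * of_nat CARD('n) / 2 + complex_of_real (ln (det (mat 1 :: real^'n^'n)))"
    using assms mat_1_in_posdef_cone unfolding normalized_log_det_def by blast
  then show ?thesis by simp
qed

lemma normalized_log_det_unique:
  assumes f: "normalized_log_det f" and g: "normalized_log_det g"
  shows "f = g"
proof
  fix Z
  show "f Z = g Z"
  proof (cases "Z \<in> siegel_H")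
    case True
    show ?thesis
    proof (rule siegel_H_log_eqI[OF _ _ _ _ True])
      show "continuous_on siegel_H f" "continuous_on siegel_H g"
        using f g by (simp_all add: normalized_log_det_continuous_on)
      show "exp (f Z) = exp (g Z)" if "Z \<in> siegel_H" for Z
        using f g that by (simp add: normalized_log_det_exp)
      show "f (imag_mat (mat 1)) = g (imag_mat (mat 1))"
        using f g by (simp add: normalized_log_det_imag_mat_1)
    qed
  qed (use f g in \<open>simp add: normalized_log_det_def\<close>)
qed

lemma h_siegel_eqI:
  assumes "normalized_log_det f"
  shows "h_siegel = f"
proof -
  have "h_siegel = (THE f. normalized_log_det f)"
    by (simp add: h_siegel_def normalized_log_det_def)
  also have "\<dots> = f"
    using assms normalized_log_det_unique by blast
  finally show ?thesis .
qed

lemma normalized_log_det_h_siegel: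
  "normalized_log_det (f :: complex^'n^'n \<Rightarrow> complex) \<Longrightarrow> normalized_log_det (h_siegel :: complex^'n^'n \<Rightarrow> complex)"
  by (simp add: h_siegel_eqI)

section \<open>Complex differentiability on the Siegel space\<close>

definition complex_linear_mat :: "(complex^'n^'n \<Rightarrow> complex) \<Rightarrow> bool" where
  "complex_linear_mat D \<longleftrightarrow> (\<forall>c A. D (\<chi> i j. c * A $ i $ j) = c * D A)"

definition complex_differentiable_siegel :: "(complex^'n^'n \<Rightarrow> complex) \<Rightarrow> complex^'n^'n \<Rightarrow> bool" where
  "complex_differentiable_siegel f Z \<longleftrightarrow>
     (\<exists>D. complex_linear_mat D \<and> (f has_derivative D) (at Z within siegel_H))"

lemma holomorphic_siegelI:
  fixes f g :: "complex^'n^'n \<Rightarrow> complex"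
  assumes "\<And>Z. Z \<in> siegel_H \<Longrightarrow> complex_differentiable_siegel g Z"
    and "\<And>Z. Z \<in> siegel_H \<Longrightarrow> f Z = g Z"
  shows "holomorphic_siegel f"
  unfolding holomorphic_siegel_def
proof
  fix Z :: "complex^'n^'n" assume Z: "Z \<in> siegel_H"
  obtain D where D: "complex_linear_mat D" "(g has_derivative D) (at Z within siegel_H)"
    using assms(1)[OF Z] unfolding complex_differentiable_siegel_def by blast
  have "(f has_derivative D) (at Z within siegel_H)"
    by (rule has_derivative_transform[OF Z _ D(2)]) (use assms(2) in auto)
  then show "\<exists>D. (\<forall>c A. D (\<chi> i j. c * A $ i $ j) = c * D A) \<and> (f has_derivative D) (at Z within siegel_H)"
    using D(1) unfolding complex_linear_mat_def by blast
qed

lemma complex_differentiable_siegel_const: "complex_differentiable_siegel (\<lambda>Z. c) Z"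
  unfolding complex_differentiable_siegel_def complex_linear_mat_def
  by (intro exI[of _ "\<lambda>_. 0"]) (auto intro: has_derivative_const)

lemma complex_differentiable_siegel_entry:
  "complex_differentiable_siegel (\<lambda>Z::complex^'n^'n. Z $ i $ j) Z"
  unfolding complex_differentiable_siegel_def complex_linear_mat_def
proof (intro exI[of _ "\<lambda>A. A $ i $ j"] conjI allI)
  have "bounded_linear (\<lambda>A::complex^'n^'n. A $ i $ j)"
    by (intro bounded_linear_compose[OF bounded_linear_vec_nth] bounded_linear_vec_nth)
  then show "((\<lambda>Z. Z $ i $ j) has_derivative (\<lambda>A. A $ i $ j)) (at Z within siegel_H)"
    by (rule bounded_linear_imp_has_derivative)
qed simp

lemma complex_differentiable_siegel_add:
  assumes "complex_differentiable_siegel f Z" "complex_differentiable_siegel g Z"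
  shows "complex_differentiable_siegel (\<lambda>Z. f Z + g Z) Z"
proof -
  obtain D E where "complex_linear_mat D" "(f has_derivative D) (at Z within siegel_H)"
    "complex_linear_mat E" "(g has_derivative E) (at Z within siegel_H)"
    using assms unfolding complex_differentiable_siegel_def by blast
  then show ?thesis unfolding complex_differentiable_siegel_def
    by (intro exI[of _ "\<lambda>A. D A + E A"] conjI has_derivative_add)
       (auto simp: complex_linear_mat_def algebra_simps)
qed

lemma complex_differentiable_siegel_mult:
  assumes "complex_differentiable_siegel f Z" "complex_differentiable_siegel g Z"
  shows "complex_differentiable_siegel (\<lambda>Z. f Z * g Z) Z"
proof -
  obtain D E where "complex_linear_mat D" "(f has_derivative D) (at Z within siegel_H)"
    "complex_linear_mat E" "(g has_derivative E) (at Z within siegel_H)"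
    using assms unfolding complex_differentiable_siegel_def by blast
  then show ?thesis unfolding complex_differentiable_siegel_def
    by (intro exI[of _ "\<lambda>A. f Z * E A + D A * g Z"] conjI has_derivative_mult)
       (auto simp: complex_linear_mat_def algebra_simps)
qed

lemma complex_differentiable_siegel_inverse:
  assumes "complex_differentiable_siegel f Z" "f Z \<noteq> 0"
  shows "complex_differentiable_siegel (\<lambda>Z. inverse (f Z)) Z"
proof -
  obtain D where D: "complex_linear_mat D" "(f has_derivative D) (at Z within siegel_H)"
    using assms unfolding complex_differentiable_siegel_def by blast
  from D(1) Deriv.has_derivative_inverse[OF assms(2) D(2)] show ?thesis
    unfolding complex_differentiable_siegel_def complex_linear_mat_def
    by (intro exI[of _ "\<lambda>A. - (inverse (f Z) * D A * inverse (f Z))"]) (simp add: algebra_simps)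
qed

lemma complex_differentiable_siegel_divide:
  "complex_differentiable_siegel f Z \<Longrightarrow> complex_differentiable_siegel g Z \<Longrightarrow> g Z \<noteq> 0 \<Longrightarrow>
    complex_differentiable_siegel (\<lambda>Z. f Z / g Z) Z"
  unfolding divide_inverse
  by (intro complex_differentiable_siegel_mult complex_differentiable_siegel_inverse)

lemma complex_differentiable_siegel_Ln:
  assumes "complex_differentiable_siegel f Z" "0 < Im (f Z)"
  shows "complex_differentiable_siegel (\<lambda>Z. Ln (f Z)) Z"
proof -
  obtain D where D: "complex_linear_mat D" "(f has_derivative D) (at Z within siegel_H)"
    using assms unfolding complex_differentiable_siegel_def by blast
  have "f Z \<notin> \<real>\<^sub>\<le>\<^sub>0" using assms(2) by (auto simp: complex_nonpos_Reals_iff)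
  then have "(Ln has_derivative (\<lambda>h. inverse (f Z) * h)) (at (f Z))"
    using has_field_derivative_Ln by (simp add: has_field_derivative_def)
  from has_derivative_compose[OF D(2) this]
  have "((\<lambda>Z. Ln (f Z)) has_derivative (\<lambda>A. inverse (f Z) * D A)) (at Z within siegel_H)" .
  moreover have "complex_linear_mat (\<lambda>A. inverse (f Z) * D A)"
    using D(1) by (simp add: complex_linear_mat_def)
  ultimately show ?thesis
    unfolding complex_differentiable_siegel_def by blast
qed

lemma complex_differentiable_siegel_sum:
  "(\<And>k. k \<in> K \<Longrightarrow> complex_differentiable_siegel (f k) Z) \<Longrightarrow>
    complex_differentiable_siegel (\<lambda>Z. \<Sum>k\<in>K. f k Z) Z"
  by (induction K rule: infinite_finite_induct)
     (auto intro: complex_differentiable_siegel_add complex_differentiable_siegel_const)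

lemma complex_differentiable_siegel_prod:
  "(\<And>k. k \<in> K \<Longrightarrow> complex_differentiable_siegel (f k) Z) \<Longrightarrow>
    complex_differentiable_siegel (\<lambda>Z. \<Prod>k\<in>K. f k Z) Z"
  by (induction K rule: infinite_finite_induct)
     (auto intro: complex_differentiable_siegel_mult complex_differentiable_siegel_const)

lemma complex_differentiable_siegel_det_submatrix:
  "complex_differentiable_siegel (\<lambda>Z. det (principal_submatrix \<sigma> Z)) Z"
  unfolding det_def principal_submatrix_def
  by (auto intro!: complex_differentiable_siegel_sum complex_differentiable_siegel_mult
      complex_differentiable_siegel_const complex_differentiable_siegel_prod
      complex_differentiable_siegel_entry)

lemma complex_differentiable_siegel_det: "complex_differentiable_siegel det Z"
  using complex_differentiable_siegel_det_submatrix[of id Z] by (simp add: principal_submatrix_def)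

section \<open>Existence in degrees 1, 2, 3 from leading principal minors\<close>

lemma Ln_i_times_of_real: "0 < r \<Longrightarrow> Ln (\<i> * complex_of_real r) = complex_of_real (ln r) + \<i> * pi / 2"
  using Ln_times_of_real[of r \<i>] by (simp add: mult.commute Ln_of_real)

lemma normalized_log_det_of_factors:
  fixes g :: "'n \<Rightarrow> complex^'n^'n \<Rightarrow> complex"
  assumes diff: "\<And>k Z. Z \<in> siegel_H \<Longrightarrow> complex_differentiable_siegel (g k) Z"
    and Im_pos: "\<And>k Z. Z \<in> siegel_H \<Longrightarrow> 0 < Im (g k Z)"
    and prod: "\<And>Z. Z \<in> siegel_H \<Longrightarrow> (\<Prod>k\<in>UNIV. g k Z) = det Z"
    and Re_imag: "\<And>k Y. Y \<in> posdef_cone \<Longrightarrow> Re (g k (imag_mat Y)) = 0"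
  shows "normalized_log_det (\<lambda>Z. if Z \<in> siegel_H then \<Sum>k\<in>UNIV. Ln (g k Z) else 0)"
  unfolding normalized_log_det_def
proof (intro conjI ballI allI impI)
  show "holomorphic_siegel (\<lambda>Z. if Z \<in> siegel_H then \<Sum>k\<in>UNIV. Ln (g k Z) else 0)"
    by (rule holomorphic_siegelI[where g = "\<lambda>Z. \<Sum>k\<in>UNIV. Ln (g k Z)"])
       (auto intro!: complex_differentiable_siegel_sum complex_differentiable_siegel_Ln diff Im_pos)
next
  fix Z :: "complex^'n^'n" assume Z: "Z \<in> siegel_H"
  then have "g k Z \<noteq> 0" for k using Im_pos[OF Z, of k] by auto
  then show "exp (if Z \<in> siegel_H then \<Sum>k\<in>UNIV. Ln (g k Z) else 0) = det Z"
    using Z prod[OF Z] by (simp add: exp_sum)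
next
  fix Y :: "real^'n^'n" assume Y: "Y \<in> posdef_cone"
  have iY: "imag_mat Y \<in> siegel_H" by (rule imag_mat_in_siegel_H[OF Y])
  define r where "r k = Im (g k (imag_mat Y))" for k
  have r_pos: "0 < r k" for k using Im_pos[OF iY] by (simp add: r_def)
  have g_eq: "g k (imag_mat Y) = \<i> * complex_of_real (r k)" for k
    using Re_imag[OF Y, of k] by (simp add: r_def complex_eq_iff)
  have "\<i> ^ CARD('n) * complex_of_real (\<Prod>k\<in>UNIV. r k) = \<i> ^ CARD('n) * complex_of_real (det Y)"
    using prod[OF iY] by (simp add: g_eq prod.distrib det_imag_mat)
  then have prod_r: "(\<Prod>k\<in>UNIV. r k) = det Y" by (simp del: of_real_prod)
  have "(\<Sum>k\<in>UNIV. ln (r k)) = ln (det Y)"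
    unfolding prod_r[symmetric] by (rule ln_prod[symmetric]) (use r_pos in \<open>simp_all add: less_imp_neq[symmetric]\<close>)
  then have "(\<Sum>k\<in>UNIV. Ln (g k (imag_mat Y)))
      = complex_of_real (ln (det Y)) + of_nat CARD('n) * (\<i> * pi / 2)"
    by (simp add: g_eq Ln_i_times_of_real r_pos sum.distrib flip: of_real_sum)
  then show "(if imag_mat Y \<in> siegel_H then \<Sum>k\<in>UNIV. Ln (g k (imag_mat Y)) else 0)
      = pi * \<i> * of_nat CARD('n) / 2 + complex_of_real (ln (det Y))"
    using iY by (simp add: algebra_simps)
qed (simp)

lemma block1_eq_principal_submatrix: "block1 Z = principal_submatrix (\<lambda>_. 0) Z"
  by (simp add: block1_def principal_submatrix_def)

lemma block2_eq_principal_submatrix: "block2 Z = principal_submatrix idx23 Z"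
  by (simp add: block2_def principal_submatrix_def)

lemma block1_in_siegel_H: "Z \<in> siegel_H \<Longrightarrow> block1 Z \<in> siegel_H"
  unfolding block1_eq_principal_submatrix by (rule principal_submatrix_in_siegel_H[OF inj_num1_to_num3])

lemma block2_in_siegel_H: "Z \<in> siegel_H \<Longrightarrow> block2 Z \<in> siegel_H"
  unfolding block2_eq_principal_submatrix by (rule principal_submatrix_in_siegel_H[OF inj_idx23])

lemma det_block1: "det (block1 Z) = Z$0$0"
  by (simp add: det_num1 block1_def)

lemma det_block2: "det (block2 Z) = Z$0$0 * Z$1$1 - Z$0$1 * Z$1$0"
  by (simp add: det_num2 block2_def idx23_def)

lemma complex_differentiable_siegel_det_block2:
  "complex_differentiable_siegel (\<lambda>Z. det (block2 Z)) Z"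
  unfolding block2_eq_principal_submatrix by (rule complex_differentiable_siegel_det_submatrix)

lemma Im_det_div_pos_2:
  fixes Z :: "complex^2^2"
  assumes Z: "Z \<in> siegel_H"
  shows "0 < Im (det Z / Z$0$0)"
proof -
  have a: "Z$0$0 \<noteq> 0" using siegel_H_Im_diag_pos[OF Z, of 0] by auto
  define x :: "complex^2" where "x = (\<chi> i. if i = 0 then - Z$0$1 / Z$0$0 else 1)"
  have Zx: "(Z *v x) $ 0 = 0" "(Z *v x) $ 1 = det Z / Z$0$0"
    using a siegel_H_entry_sym[OF Z, of 1 0]
    by (simp_all add: x_def matrix_vector_mult_def sum_UNIV_num2 det_num2 field_simps)
  have "0 < Im ((Z *v x) $ 1)"
  proof (rule siegel_H_Im_pos_of_kernel[OF Z])
    show "x $ 1 = 1" by (simp add: x_def)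
    show "(Z *v x) $ i = 0" if "i \<noteq> 1" for i
      using that Zx(1) exhaust_num2[of i] by auto
  qed
  then show ?thesis using Zx by simp
qed

lemma Im_det_block2_div_pos:
  assumes "Z \<in> siegel_H"
  shows "0 < Im (det (block2 Z) / Z$0$0)"
  using Im_det_div_pos_2[OF block2_in_siegel_H[OF assms]] by (simp add: block2_def idx23_def)

lemma Im_det_div_pos_3:
  fixes Z :: "complex^3^3"
  assumes Z: "Z \<in> siegel_H"
  shows "0 < Im (det Z / det (block2 Z))"
proof -
  define a b c d e f
    where entry_defs: "a = Z$0$0" "b = Z$0$1" "c = Z$0$2" "d = Z$1$1" "e = Z$1$2" "f = Z$2$2"
  have ents: "Z$0$0 = a" "Z$0$1 = b" "Z$1$0 = b" "Z$0$2 = c" "Z$2$0 = c" "Z$1$1 = d"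
      "Z$1$2 = e" "Z$2$1 = e" "Z$2$2 = f"
    using siegel_H_entry_sym[OF Z] by (auto simp: entry_defs)
  define D where "D = a * d - b * b"
  have D: "det (block2 Z) = D" by (simp add: det_block2 ents D_def)
  have "D \<noteq> 0" using Im_det_block2_div_pos[OF Z] by (auto simp: D)
  \<comment> \<open>\<open>x = (-w\<^sub>0, -w\<^sub>1, 1)\<close> solves the first two rows of \<open>Z x = (0, 0, det Z / D)\<close> by Cramer's rule\<close>
  define w0 w1 where w_defs: "w0 = (d * c - b * e) / D" "w1 = (a * e - b * c) / D"
  define x :: "complex^3" where "x = (\<chi> i. if i = 0 then - w0 else if i = 1 then - w1 else 1)"
  have Zx: "(Z *v x) $ i = Z$i$0 * (- w0) + Z$i$1 * (- w1) + Z$i$2" for i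
    by (simp add: x_def matrix_vector_mult_def sum_UNIV_num3)
  have "(Z *v x) $ 0 = 0"
    using \<open>D \<noteq> 0\<close> unfolding Zx ents w_defs by (simp add: field_simps, unfold D_def, algebra)
  moreover have "(Z *v x) $ 1 = 0"
    using \<open>D \<noteq> 0\<close> unfolding Zx ents w_defs by (simp add: field_simps, unfold D_def, algebra)
  moreover have "(Z *v x) $ 2 = det Z / D"
    using \<open>D \<noteq> 0\<close> unfolding Zx ents w_defs det_num3
    by (simp add: field_simps, unfold D_def, algebra)
  moreover have "0 < Im ((Z *v x) $ 2)"
  proof (rule siegel_H_Im_pos_of_kernel[OF Z])
    show "x $ 2 = 1" by (simp add: x_def)
    show "(Z *v x) $ i = 0" if "i \<noteq> 2" for i
      using that calculation exhaust_num3[of i] by auto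
  qed
  ultimately show ?thesis by (simp add: D)
qed

lemma normalized_log_det_h_siegel_1: "normalized_log_det (h_siegel :: complex^1^1 \<Rightarrow> complex)"
proof (rule normalized_log_det_h_siegel, rule normalized_log_det_of_factors)
  fix k :: 1 and Z :: "complex^1^1"
  show "complex_differentiable_siegel (\<lambda>Z. Z$0$0) Z" by (rule complex_differentiable_siegel_entry)
  show "Z \<in> siegel_H \<Longrightarrow> 0 < Im (Z$0$0)" by (rule siegel_H_Im_diag_pos)
  show "(\<Prod>k\<in>(UNIV :: 1 set). Z$0$0) = det Z" by (simp add: det_num1 UNIV_num1_eq)
  fix Y :: "real^1^1"
  show "Re (imag_mat Y $ 0 $ 0) = 0" by simp
qed

lemma normalized_log_det_h_siegel_2: "normalized_log_det (h_siegel :: complex^2^2 \<Rightarrow> complex)"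
proof (rule normalized_log_det_h_siegel,
    rule normalized_log_det_of_factors[where g = "\<lambda>k Z. if k = 0 then Z$0$0 else det Z / Z$0$0"])
  fix k :: 2 and Z :: "complex^2^2"
  assume Z: "Z \<in> siegel_H"
  have "Z$0$0 \<noteq> 0" using siegel_H_Im_diag_pos[OF Z, of 0] by auto
  then show "complex_differentiable_siegel (\<lambda>Z. if k = 0 then Z$0$0 else det Z / Z$0$0) Z"
    by (cases "k = 0") (auto intro!: complex_differentiable_siegel_divide
        complex_differentiable_siegel_entry complex_differentiable_siegel_det)
  show "0 < Im (if k = 0 then Z$0$0 else det Z / Z$0$0)"
    using siegel_H_Im_diag_pos[OF Z] Im_det_div_pos_2[OF Z] by simp
  show "(\<Prod>k\<in>(UNIV :: 2 set). if k = 0 then Z$0$0 else det Z / Z$0$0) = det Z"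
    using \<open>Z$0$0 \<noteq> 0\<close> by (simp add: prod_UNIV_num2)
next
  fix k :: 2 and Y :: "real^2^2"
  show "Re (if k = 0 then imag_mat Y $ 0 $ 0 else det (imag_mat Y) / imag_mat Y $ 0 $ 0) = 0"
    by (simp add: det_imag_mat Re_divide)
qed

lemma normalized_log_det_h_siegel_3: "normalized_log_det (h_siegel :: complex^3^3 \<Rightarrow> complex)"
proof (rule normalized_log_det_h_siegel,
    rule normalized_log_det_of_factors[where g = "\<lambda>k Z. if k = 0 then Z$0$0
      else if k = 1 then det (block2 Z) / Z$0$0 else det Z / det (block2 Z)"])
  fix k :: 3 and Z :: "complex^3^3"
  assume Z: "Z \<in> siegel_H"
  have "Z$0$0 \<noteq> 0" using siegel_H_Im_diag_pos[OF Z, of 0] by auto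
  moreover have "det (block2 Z) \<noteq> 0" using Im_det_block2_div_pos[OF Z] by auto
  ultimately show "complex_differentiable_siegel (\<lambda>Z. if k = 0 then Z$0$0
      else if k = 1 then det (block2 Z) / Z$0$0 else det Z / det (block2 Z)) Z"
    by (cases "k = 0"; cases "k = 1") (auto intro!: complex_differentiable_siegel_divide
        complex_differentiable_siegel_entry complex_differentiable_siegel_det
        complex_differentiable_siegel_det_block2)
  show "0 < Im (if k = 0 then Z$0$0 else if k = 1 then det (block2 Z) / Z$0$0 else det Z / det (block2 Z))"
    using siegel_H_Im_diag_pos[OF Z] Im_det_block2_div_pos[OF Z] Im_det_div_pos_3[OF Z] by simp
  show "(\<Prod>k\<in>(UNIV :: 3 set). if k = 0 then Z$0$0
      else if k = 1 then det (block2 Z) / Z$0$0 else det Z / det (block2 Z)) = det Z"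
    using \<open>Z$0$0 \<noteq> 0\<close> \<open>det (block2 Z) \<noteq> 0\<close> by (simp add: prod_UNIV_num3)
next
  fix k :: 3 and Y :: "real^3^3"
  show "Re (if k = 0 then imag_mat Y $ 0 $ 0 else if k = 1 then det (block2 (imag_mat Y)) / imag_mat Y $ 0 $ 0
      else det (imag_mat Y) / det (block2 (imag_mat Y))) = 0"
    by (simp add: det_imag_mat det_block2 Re_divide power3_eq_cube)
qed

lemmas exp_h_siegel =
  normalized_log_det_exp[OF normalized_log_det_h_siegel_1]
  normalized_log_det_exp[OF normalized_log_det_h_siegel_2]
  normalized_log_det_exp[OF normalized_log_det_h_siegel_3]

lemmas continuous_on_h_siegel_3 = normalized_log_det_continuous_on[OF normalized_log_det_h_siegel_3]

lemmas h_siegel_imag_mat_1 =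
  normalized_log_det_imag_mat_1[OF normalized_log_det_h_siegel_1]
  normalized_log_det_imag_mat_1[OF normalized_log_det_h_siegel_2]
  normalized_log_det_imag_mat_1[OF normalized_log_det_h_siegel_3]

section \<open>Behaviour under \<open>Z \<mapsto> - Z\<^sup>-\<^sup>1\<close> and \<open>Z \<mapsto> W Z W\<close>\<close>

lemma continuous_on_neg_matrix_inv_3:
  "continuous_on siegel_H (\<lambda>Z :: complex^3^3. - matrix_inv Z)"
proof -
  have entry: "continuous_on siegel_H (\<lambda>Z :: complex^3^3. Z $ i $ j)" for i j
    by (intro continuous_on_component continuous_on_id)
  have "continuous_on siegel_H (\<lambda>Z :: complex^3^3. det Z)"
    unfolding det_num3 by (intro continuous_on_add continuous_on_diff continuous_on_mult entry)
  moreover have "continuous_on siegel_H (\<lambda>Z :: complex^3^3. adjugate3 Z $ i $ j)" for i j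
    unfolding adjugate3_def vec_lambda_beta by (intro continuous_on_diff continuous_on_mult entry)
  moreover have "\<forall>Z\<in>siegel_H. det (Z :: complex^3^3) \<noteq> 0"
    using siegel_H_det_nonzero by blast
  ultimately have "continuous_on siegel_H (\<lambda>Z :: complex^3^3. - (\<chi> i j. adjugate3 Z $ i $ j / det Z))"
    by (intro continuous_on_minus continuous_on_vec_lambda continuous_on_divide)
  then show ?thesis
    by (rule continuous_on_eq) (simp add: matrix_inv_3 siegel_H_det_nonzero)
qed

lemma matrix_inv_3_entry_00:
  fixes Z :: "complex^3^3"
  shows "det Z \<noteq> 0 \<Longrightarrow> matrix_inv Z $ 0 $ 0 = (Z$1$1 * Z$2$2 - Z$1$2 * Z$2$1) / det Z"
  by (simp add: matrix_inv_3 adjugate3_def)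

lemma det_block2_neg_matrix_inv_3:
  fixes Z :: "complex^3^3"
  assumes "det Z \<noteq> 0"
  shows "det (block2 (- matrix_inv Z)) = Z$2$2 / det Z"
proof -
  have wrap: "(3::3) = 0" "(4::3) = 1" by simp_all
  \<comment> \<open>Jacobi: a \<open>2 \<times> 2\<close> minor of the adjugate is the complementary entry times \<open>det Z\<close>\<close>
  have "adjugate3 Z $ 0 $ 0 * adjugate3 Z $ 1 $ 1 - adjugate3 Z $ 0 $ 1 * adjugate3 Z $ 1 $ 0 = Z$2$2 * det Z"
    by (simp add: adjugate3_def det_num3 wrap) (simp add: algebra_simps)
  then show ?thesis
    using assms by (simp add: det_block2 matrix_inv_3 field_simps power2_eq_square)
qed

lemma det_neg_matrix_inv_3:
  fixes Z :: "complex^3^3"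
  assumes "det Z \<noteq> 0"
  shows "det (- matrix_inv Z) = - 1 / det Z"
proof -
  have "det (matrix_inv Z) * det Z = 1"
    using matrix_inv_inverse(2)[of Z] assms invertible_det_nz by (metis det_I det_mul)
  moreover have "det (- A) = - det A" for A :: "complex^3^3"
    by (simp add: det_num3 algebra_simps)
  ultimately show ?thesis using assms by (simp add: field_simps)
qed

lemma W3_conj_eq_principal_submatrix: "W3 ** Z ** W3 = principal_submatrix (\<lambda>i. 2 - i) Z"
proof -
  have "\<forall>i j. (W3 ** Z ** W3) $ i $ j = Z $ (2 - i) $ (2 - j)"
    by (simp add: forall_num3 matrix_matrix_mult_def sum_UNIV_num3 W3_def)
  then show ?thesis by (simp add: vec_eq_iff principal_submatrix_def)
qed

lemma W3_conj_entry: "(W3 ** Z ** W3) $ i $ j = Z $ (2 - i) $ (2 - j)"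
  by (simp add: W3_conj_eq_principal_submatrix principal_submatrix_def)

lemma det_W3_conj: "det (W3 ** Z ** W3) = det Z"
  by (simp add: det_num3 W3_conj_entry algebra_simps)

lemma W3_conj_in_siegel_H: "Z \<in> siegel_H \<Longrightarrow> W3 ** Z ** W3 \<in> siegel_H"
  unfolding W3_conj_eq_principal_submatrix by (rule principal_submatrix_in_siegel_H[OF inj_reverse_num3])

lemma continuous_on_W3_conj: "continuous_on S (\<lambda>Z. W3 ** Z ** W3)"
  unfolding W3_conj_eq_principal_submatrix by (intro continuous_on_principal_submatrix continuous_on_id)

lemma imag_mat_1_invariant:
  "- matrix_inv (imag_mat (mat 1)) = imag_mat (mat 1)"
  "W3 ** imag_mat (mat 1) ** W3 = imag_mat (mat 1)"
  "block1 (imag_mat (mat 1)) = imag_mat (mat 1)"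
  "block2 (imag_mat (mat 1)) = imag_mat (mat 1)"
  by (simp_all only: neg_matrix_inv_imag_mat_1 W3_conj_eq_principal_submatrix
      block1_eq_principal_submatrix block2_eq_principal_submatrix principal_submatrix_imag_mat_1
      inj_reverse_num3 inj_num1_to_num3 inj_idx23)

lemma continuous_on_h_siegel_submatrix:
  assumes "normalized_log_det (h_siegel :: complex^'m^'m \<Rightarrow> complex)" and "inj (\<sigma> :: 'm \<Rightarrow> 'n::finite)"
    and "continuous_on S F" and "F ` S \<subseteq> siegel_H"
  shows "continuous_on S (\<lambda>Z. h_siegel (principal_submatrix \<sigma> (F Z)))"
  using assms
  by (intro continuous_on_compose2[OF normalized_log_det_continuous_on[OF assms(1)]]
      continuous_on_principal_submatrix)
     (auto intro: principal_submatrix_in_siegel_H)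

lemma exp_pi_i_multiples: "exp (2 * (pi * \<i>)) = 1" "exp (3 * (pi * \<i>)) = -1"
proof -
  have "exp (of_nat n * (pi * \<i>)) = (-1) ^ n" for n
    unfolding exp_of_nat_mult by (simp add: mult.commute)
  from this[of 2] this[of 3] show "exp (2 * (pi * \<i>)) = 1" "exp (3 * (pi * \<i>)) = -1"
    by simp_all
qed

lemma h_siegel_block1_neg_inv:
  fixes Z :: "complex^3^3"
  assumes "Z \<in> siegel_H"
  shows "h_siegel (block1 (- matrix_inv Z)) = h_siegel (block2 (W3 ** Z ** W3)) - h_siegel Z + pi * \<i>"
proof (rule siegel_H_log_eqI[OF _ _ _ _ assms])
  show "continuous_on siegel_H (\<lambda>Z. h_siegel (block1 (- matrix_inv Z)))"
    unfolding block1_eq_principal_submatrix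
    by (rule continuous_on_h_siegel_submatrix[OF normalized_log_det_h_siegel_1 inj_num1_to_num3
          continuous_on_neg_matrix_inv_3]) (auto intro: neg_matrix_inv_in_siegel_H)
  have "continuous_on siegel_H (\<lambda>Z. h_siegel (block2 (W3 ** Z ** W3)))"
    unfolding block2_eq_principal_submatrix
    by (rule continuous_on_h_siegel_submatrix[OF normalized_log_det_h_siegel_2 inj_idx23
          continuous_on_W3_conj]) (auto intro: W3_conj_in_siegel_H)
  then show "continuous_on siegel_H (\<lambda>Z. h_siegel (block2 (W3 ** Z ** W3)) - h_siegel Z + pi * \<i>)"
    by (intro continuous_intros continuous_on_h_siegel_3)
  fix Z :: "complex^3^3" assume Z: "Z \<in> siegel_H"
  have "det Z \<noteq> 0" by (rule siegel_H_det_nonzero[OF Z])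
  then show "exp (h_siegel (block1 (- matrix_inv Z))) =
      exp (h_siegel (block2 (W3 ** Z ** W3)) - h_siegel Z + pi * \<i>)"
    using Z by (simp add: exp_h_siegel block1_in_siegel_H block2_in_siegel_H neg_matrix_inv_in_siegel_H
        W3_conj_in_siegel_H exp_diff exp_add exp_pi_i_multiples det_block1 det_block2
        matrix_inv_3_entry_00 W3_conj_entry field_simps)
next
  show "h_siegel (block1 (- matrix_inv (imag_mat (mat 1)))) =
      h_siegel (block2 (W3 ** imag_mat (mat 1) ** W3)) - h_siegel (imag_mat (mat 1) :: complex^3^3) + pi * \<i>"
    by (simp add: imag_mat_1_invariant h_siegel_imag_mat_1 field_simps)
qed

lemma h_siegel_block2_neg_inv:
  fixes Z :: "complex^3^3"
  assumes "Z \<in> siegel_H"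
  shows "h_siegel (block2 (- matrix_inv Z)) = h_siegel (block1 (W3 ** Z ** W3)) - h_siegel Z + 2 * (pi * \<i>)"
proof (rule siegel_H_log_eqI[OF _ _ _ _ assms])
  show "continuous_on siegel_H (\<lambda>Z. h_siegel (block2 (- matrix_inv Z)))"
    unfolding block2_eq_principal_submatrix
    by (rule continuous_on_h_siegel_submatrix[OF normalized_log_det_h_siegel_2 inj_idx23
          continuous_on_neg_matrix_inv_3]) (auto intro: neg_matrix_inv_in_siegel_H)
  have "continuous_on siegel_H (\<lambda>Z. h_siegel (block1 (W3 ** Z ** W3)))"
    unfolding block1_eq_principal_submatrix
    by (rule continuous_on_h_siegel_submatrix[OF normalized_log_det_h_siegel_1 inj_num1_to_num3
          continuous_on_W3_conj]) (auto intro: W3_conj_in_siegel_H)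
  then show "continuous_on siegel_H (\<lambda>Z. h_siegel (block1 (W3 ** Z ** W3)) - h_siegel Z + 2 * (pi * \<i>))"
    by (intro continuous_intros continuous_on_h_siegel_3)
  fix Z :: "complex^3^3" assume Z: "Z \<in> siegel_H"
  have "det Z \<noteq> 0" by (rule siegel_H_det_nonzero[OF Z])
  then show "exp (h_siegel (block2 (- matrix_inv Z))) =
      exp (h_siegel (block1 (W3 ** Z ** W3)) - h_siegel Z + 2 * (pi * \<i>))"
    using Z by (simp add: exp_h_siegel block1_in_siegel_H block2_in_siegel_H neg_matrix_inv_in_siegel_H
        W3_conj_in_siegel_H exp_diff exp_add exp_pi_i_multiples det_block1
        det_block2_neg_matrix_inv_3 W3_conj_entry)
next
  show "h_siegel (block2 (- matrix_inv (imag_mat (mat 1)))) = h_siegel (block1 (W3 ** imag_mat (mat 1) ** W3))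
      - h_siegel (imag_mat (mat 1) :: complex^3^3) + 2 * (pi * \<i>)"
    by (simp add: imag_mat_1_invariant h_siegel_imag_mat_1 field_simps)
qed

lemma h_siegel_neg_inv:
  fixes Z :: "complex^3^3"
  assumes "Z \<in> siegel_H"
  shows "h_siegel (- matrix_inv Z) = - h_siegel Z + 3 * (pi * \<i>)"
proof (rule siegel_H_log_eqI[OF _ _ _ _ assms])
  show "continuous_on siegel_H (\<lambda>Z. h_siegel (- matrix_inv Z :: complex^3^3))"
    by (rule continuous_on_compose2[OF continuous_on_h_siegel_3 continuous_on_neg_matrix_inv_3])
       (auto intro: neg_matrix_inv_in_siegel_H)
  show "continuous_on siegel_H (\<lambda>Z :: complex^3^3. - h_siegel Z + 3 * (pi * \<i>))"
    by (intro continuous_intros continuous_on_h_siegel_3)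
  fix Z :: "complex^3^3" assume Z: "Z \<in> siegel_H"
  have "det Z \<noteq> 0" by (rule siegel_H_det_nonzero[OF Z])
  then show "exp (h_siegel (- matrix_inv Z)) = exp (- h_siegel Z + 3 * (pi * \<i>))"
    using Z by (simp only: exp_add exp_minus exp_h_siegel neg_matrix_inv_in_siegel_H
        exp_pi_i_multiples) (simp add: det_neg_matrix_inv_3 field_simps)
next
  show "h_siegel (- matrix_inv (imag_mat (mat 1) :: complex^3^3))
      = - h_siegel (imag_mat (mat 1) :: complex^3^3) + 3 * (pi * \<i>)"
    by (simp add: imag_mat_1_invariant h_siegel_imag_mat_1 field_simps)
qed

lemma h_siegel_W3_conj:
  fixes Z :: "complex^3^3"
  assumes "Z \<in> siegel_H"
  shows "h_siegel (W3 ** Z ** W3) = h_siegel Z"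
proof (rule siegel_H_log_eqI[OF _ _ _ _ assms])
  show "continuous_on siegel_H (\<lambda>Z. h_siegel (W3 ** Z ** W3))"
    by (rule continuous_on_compose2[OF continuous_on_h_siegel_3 continuous_on_W3_conj])
       (auto intro: W3_conj_in_siegel_H)
  show "continuous_on siegel_H (h_siegel :: complex^3^3 \<Rightarrow> complex)"
    by (rule continuous_on_h_siegel_3)
  fix Z :: "complex^3^3" assume "Z \<in> siegel_H"
  then show "exp (h_siegel (W3 ** Z ** W3)) = exp (h_siegel Z)"
    by (simp add: exp_h_siegel W3_conj_in_siegel_H det_W3_conj)
qed (simp add: imag_mat_1_invariant)

theorem claim1:
  fixes s1 s2 s3 :: complex and Z :: "complex^3^3"
  assumes "Z \<in> siegel_H"
  shows "p_fun s1 s2 s3 (- matrix_inv Z) =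
         exp ((s1 + 2 * s2 + 3 * s3) * pi * \<i>) * p_fun s2 s1 (- s1 - s2 - s3) (W3 ** Z ** W3)"
proof -
  let ?H = "h_siegel Z" and ?B1 = "h_siegel (block1 (W3 ** Z ** W3))"
    and ?B2 = "h_siegel (block2 (W3 ** Z ** W3))"
  have "p_fun s1 s2 s3 (- matrix_inv Z) =
      exp (s1 * (?B2 - ?H + pi * \<i>) + s2 * (?B1 - ?H + 2 * (pi * \<i>)) + s3 * (- ?H + 3 * (pi * \<i>)))"
    using assms by (simp add: p_fun_def h_siegel_block1_neg_inv h_siegel_block2_neg_inv h_siegel_neg_inv exp_add)
  also have "\<dots> = exp ((s1 + 2 * s2 + 3 * s3) * pi * \<i> + (s2 * ?B1 + s1 * ?B2 + (- s1 - s2 - s3) * ?H))"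
    by (simp add: algebra_simps)
  also have "\<dots> = exp ((s1 + 2 * s2 + 3 * s3) * pi * \<i>) * p_fun s2 s1 (- s1 - s2 - s3) (W3 ** Z ** W3)"
    using assms by (simp add: p_fun_def h_siegel_W3_conj exp_add)
  finally show ?thesis .
qed

end
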